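(* Let $\mathcal R$ be a self-complemented reconstruction function outputting sc-voters of size at most $\lambda$, with $\lambda<m$. For any distribution $D$ on $\mathcal X\times\{-1,1\}$, any prior $P$ on $\mathcal I_\lambda\times\Sigma_\lambda$ and any $\delta\in(0,1]$, with probability at least $1-\delta$ over $S\sim D^m$, for all posteriors $Q$ aligned on $P$, $$R_D(G_{Q,S})\ \le\ R_S(G_{Q,S})+\sqrt{\frac1{2(m-\lambda)}\Big[4\lambda+\ln\frac{\xi(m-\lambda)}{\delta}\Big]}.$$
   Context: $S=((x_i,y_i))_{i=1}^m$; $\mathcal I_\lambda$ is the set of index sequences $(i_1,\dots,i_k)$, $0\le k\le\lambda$, $i_j\in\{1,\dots,m\}$; $\Sigma_\lambda=\{-1,1\}^\lambda$; $S_{\mathbf i}$ the subsequence of $S$ indexed by $\mathbf i$. A reconstruction function $\mathcal R$ maps $(S_{\mathbf i},\boldsymbol\sigma)$ to a voter $\mathcal X\to[-1,1]$ depending only on $S_{\mathbf i},\boldsymbol\sigma$; it is self-complemented if $\mathcal R(S_{\mathbf i},-\boldsymbol\sigma)=-\mathcal R(S_{\mathbf i},\boldsymbol\sigma)$ for all $S$, $\mathbf i$, $\boldsymbol\sigma$. $Q$ on $\mathcal I_\lambda\times\Sigma_\lambda$ is aligned on $P$ if $Q(\mathbf i,\boldsymbol\sigma)+Q(\mathbf i,-\boldsymbol\sigma)=P(\mathbf i,\boldsymbol\sigma)+P(\mathbf i,-\boldsymbol\sigma)$ for all $(\mathbf i,\boldsymbol\sigma)$. $P$ is fixed before seeing $S$.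 $R_{D'}(G_{Q,S})=\mathbb E_{(\mathbf i,\boldsymbol\sigma)\sim Q}\mathbb E_{(x,y)\sim D'}\tfrac12(1-y\,\mathcal R(S_{\mathbf i},\boldsymbol\sigma)(x))$ for $D'\in\{D,S\}$. $\xi(n)=\sum_{k=0}^n\binom nk(k/n)^k(1-k/n)^{n-k}$. *)

theory Defs
  imports "HOL-Probability.Probability"
begin

text \<open>Index sequences (0-based indices into the sample S = S 0, ..., S (m-1)) of length at most lam.\<close>
definition idx_seqs :: "nat \<Rightarrow> nat \<Rightarrow> nat list set" where
  "idx_seqs m lam = {is. length is \<le> lam \<and> set is \<subseteq> {..<m}}"

definition msgs :: "nat \<Rightarrow> int list set" where
  "msgs lam = {s. length s = lam \<and> set s \<subseteq> {-1, 1}}"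

text \<open>Reconstruction function: takes the compression subsequence and the message, returns a voter.\<close>
definition self_complemented :: "(('x \<times> real) list \<Rightarrow> int list \<Rightarrow> 'x \<Rightarrow> real) \<Rightarrow> bool" where
  "self_complemented R \<longleftrightarrow> (\<forall>L \<sigma>. R L (map uminus \<sigma>) = (\<lambda>x. - R L \<sigma> x))"

definition aligned :: "(nat list \<times> int list) pmf \<Rightarrow> (nat list \<times> int list) pmf \<Rightarrow> bool" where
  "aligned Q P \<longleftrightarrow> (\<forall>i \<sigma>. pmf Q (i, \<sigma>) + pmf Q (i, map uminus \<sigma>) = pmf P (i, \<sigma>) + pmf P (i, map uminus \<sigma>))"

definition xi :: "nat \<Rightarrow> real" where
  "xi n = (\<Sum>k = 0..n. real (n choose k) * (real k / real n) ^ k * (1 - real k / real n) ^ (n - k))"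

definition risk_D :: "('x \<times> real) measure \<Rightarrow> (('x \<times> real) list \<Rightarrow> int list \<Rightarrow> 'x \<Rightarrow> real)
    \<Rightarrow> (nat list \<times> int list) pmf \<Rightarrow> (nat \<Rightarrow> 'x \<times> real) \<Rightarrow> real" where
  "risk_D D R Q S = measure_pmf.expectation Q
     (\<lambda>(i, \<sigma>). \<integral>z. (1 - snd z * R (map S i) \<sigma> (fst z)) / 2 \<partial>D)"

definition risk_S :: "nat \<Rightarrow> (('x \<times> real) list \<Rightarrow> int list \<Rightarrow> 'x \<Rightarrow> real)
    \<Rightarrow> (nat list \<times> int list) pmf \<Rightarrow> (nat \<Rightarrow> 'x \<times> real) \<Rightarrow> real" where
  "risk_S m R Q S = measure_pmf.expectation Q
     (\<lambda>(i, \<sigma>). (\<Sum>j<m. (1 - snd (S j) * R (map S i) \<sigma> (fst (S j))) / 2) / real m)"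

end

theory Submission
  imports Defs
begin

text \<open>Fix a code (i, \<sigma>) and m - lam sample points outside the compression sequence i. The voter
  reconstructed from (i, \<sigma>) does not depend on these points, so Maurer's lemma together with a
  Pinsker-type estimate of binomial weights bounds the expectation of exp (2 (m - lam) e^2) by
  xi (m - lam), where e is the deviation of its true loss from its loss on these points. Averaging
  over the prior and applying Markov's inequality, with probability at least 1 - \<delta> the P-average
  of exp (2 (m - lam) e^2) is at most xi (m - lam) / \<delta>. Self-complementation makes the gap between
  true and empirical loss change sign under \<sigma> \<mapsto> -\<sigma>, so for a posterior aligned on P the risk
  gap is at most the P-average of the absolute gap, which exceeds the P-average of |e| by at most
  lam / m; Jensen's inequality for the square and the exponential then yields the bound.\<close>

lemma expectation_binomial_pmf_Suc:
  fixes \<phi> :: "nat \<Rightarrow> real"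
  assumes p: "p \<in> {0..1}"
  shows "measure_pmf.expectation (binomial_pmf (Suc n) p) \<phi> =
     (1 - p) * measure_pmf.expectation (binomial_pmf n p) \<phi>
     + p * measure_pmf.expectation (binomial_pmf n p) (\<lambda>k. \<phi> (Suc k))"
proof -
  have shift: "measure_pmf.expectation (binomial_pmf n p \<bind> (\<lambda>k. return_pmf (c + k))) \<phi> =
      measure_pmf.expectation (binomial_pmf n p) (\<lambda>k. \<phi> (c + k))" for c
    by (subst pmf_expectation_bind[where A="{..n}"])
       (use p in \<open>auto simp: expectation_binomial_pmf' set_pmf_binomial_eq\<close>)
  have "measure_pmf.expectation (binomial_pmf (Suc n) p) \<phi> =
     (\<Sum>b\<in>UNIV. pmf (bernoulli_pmf p) b *\<^sub>R
        measure_pmf.expectation (binomial_pmf n p \<bind> (\<lambda>k. return_pmf ((if b then 1 else 0) + k))) \<phi>)"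
    unfolding binomial_pmf_Suc[OF p]
    by (rule pmf_expectation_bind) (use p in \<open>auto intro!: finite_set_pmf_binomial_pmf\<close>)
  then show ?thesis
    using p by (simp add: UNIV_bool shift)
qed

lemma integral_unit_interval:
  fixes g :: "'a \<Rightarrow> real"
  assumes "prob_space D" and "g \<in> borel_measurable D"
    and "\<And>z. z \<in> space D \<Longrightarrow> 0 \<le> g z \<and> g z \<le> 1"
  shows "integral\<^sup>L D g \<in> {0..1}"
proof -
  interpret prob_space D by fact
  have "integrable D g"
    using assms(2,3) by (intro integrable_const_bound[where B=1] AE_I2) auto
  then show ?thesis
    using assms(3) by (auto intro!: integral_ge_const integral_le_const AE_I2)
qed

definition below_unit_chords :: "(real \<Rightarrow> real) \<Rightarrow> bool" where
  "below_unit_chords f \<longleftrightarrow> (\<forall>s u. 0 \<le> u \<longrightarrow> u \<le> 1 \<longrightarrow> f (s + u) \<le> (1 - u) * f s + u * f (s + 1))"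

lemma below_unit_chordsD:
  "below_unit_chords f \<Longrightarrow> 0 \<le> u \<Longrightarrow> u \<le> 1 \<Longrightarrow> f (s + u) \<le> (1 - u) * f s + u * f (s + 1)"
  unfolding below_unit_chords_def by blast

lemma below_unit_chords_shift:
  assumes "below_unit_chords f" shows "below_unit_chords (\<lambda>s. f (s + 1))"
  unfolding below_unit_chords_def
proof (intro allI impI)
  fix s u :: real assume "0 \<le> u" "u \<le> 1"
  then show "f (s + u + 1) \<le> (1 - u) * f (s + 1) + u * f (s + 1 + 1)"
    using below_unit_chordsD[OF assms, of u "s + 1"] by (simp add: algebra_simps)
qed

lemma exp_sq_below_unit_chords:
  assumes "0 \<le> c"
  shows "below_unit_chords (\<lambda>s. exp (c * (a - b * s)\<^sup>2))"
  unfolding below_unit_chords_def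
proof (intro allI impI)
  fix s t :: real assume t: "0 \<le> t" "t \<le> 1"
  define x y where "x = a - b * s" and "y = a - b * (s + 1)"
  have "a - b * (s + t) = (1 - t) * x + t * y"
    unfolding x_def y_def by (simp add: algebra_simps)
  then have "(a - b * (s + t))\<^sup>2 \<le> (1 - t) * x\<^sup>2 + t * y\<^sup>2"
    using convex_onD[OF convex_power2, of t x y] t by simp
  then have "c * (a - b * (s + t))\<^sup>2 \<le> c * ((1 - t) * x\<^sup>2 + t * y\<^sup>2)"
    using assms by (rule mult_left_mono)
  then have "exp (c * (a - b * (s + t))\<^sup>2) \<le> exp ((1 - t) * (c * x\<^sup>2) + t * (c * y\<^sup>2))"
    by (simp add: algebra_simps)
  also have "\<dots> \<le> (1 - t) * exp (c * x\<^sup>2) + t * exp (c * y\<^sup>2)"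
    using convex_onD[OF exp_convex, of t "c * x\<^sup>2" "c * y\<^sup>2"] t by simp
  finally show "exp (c * (a - b * (s + t))\<^sup>2)
      \<le> (1 - t) * exp (c * (a - b * s)\<^sup>2) + t * exp (c * (a - b * (s + 1))\<^sup>2)"
    unfolding x_def y_def .
qed

lemma nn_integral_below_unit_chords_le:
  assumes D: "prob_space D" and g[measurable]: "g \<in> borel_measurable D"
    and g01: "\<And>z. z \<in> space D \<Longrightarrow> 0 \<le> g z \<and> g z \<le> 1"
    and f0: "\<And>s. 0 \<le> f s" and f: "below_unit_chords f"
  shows "(\<integral>\<^sup>+y. ennreal (f (g y + s)) \<partial>D)
           \<le> ennreal ((1 - integral\<^sup>L D g) * f s + integral\<^sup>L D g * f (s + 1))"
proof -
  interpret prob_space D by (fact D)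
  have ig: "integrable D g"
    by (rule integrable_const_bound[where B=1]) (use g01 in auto)
  have "(\<integral>\<^sup>+y. ennreal (f (g y + s)) \<partial>D) \<le> (\<integral>\<^sup>+y. ennreal ((1 - g y) * f s + g y * f (s + 1)) \<partial>D)"
    using g01 below_unit_chordsD[OF f, of "g _" s]
    by (intro nn_integral_mono ennreal_leI) (auto simp: add.commute)
  also have "\<dots> = ennreal (\<integral>y. (1 - g y) * f s + g y * f (s + 1) \<partial>D)"
    using ig g01 f0
    by (intro nn_integral_eq_integral AE_I2)
       (auto intro!: integrable_add integrable_mult_left integrable_diff add_nonneg_nonneg mult_nonneg_nonneg)
  also have "(\<integral>y. (1 - g y) * f s + g y * f (s + 1) \<partial>D)
      = (1 - integral\<^sup>L D g) * f s + integral\<^sup>L D g * f (s + 1)"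
    using ig by (simp add: integral_add integral_diff algebra_simps prob_space)
  finally show ?thesis .
qed

text \<open>Maurer's lemma: for a convex function of a sum of independent [0,1]-valued variables,
  Bernoulli variables with the same mean are the worst case.\<close>
lemma nn_integral_sum_le_binomial_expectation:
  assumes D: "prob_space D" and g[measurable]: "g \<in> borel_measurable D"
    and g01: "\<And>z. z \<in> space D \<Longrightarrow> 0 \<le> g z \<and> g z \<le> 1"
    and T: "finite T"
    and f: "f \<in> borel_measurable borel" "\<And>s. 0 \<le> f s" "below_unit_chords f"
  shows "(\<integral>\<^sup>+y. ennreal (f (\<Sum>j\<in>T. g (y j))) \<partial>PiM T (\<lambda>_. D))
           \<le> ennreal (measure_pmf.expectation (binomial_pmf (card T) (integral\<^sup>L D g)) (\<lambda>k. f (real k)))"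
proof -
  define p where "p = integral\<^sup>L D g"
  have p: "p \<in> {0..1}"
    unfolding p_def using D g g01 by (rule integral_unit_interval)
  interpret product_sigma_finite "\<lambda>_. D"
    by (simp add: product_sigma_finite_def prob_space_imp_sigma_finite D)
  show ?thesis
    unfolding p_def[symmetric] using T f
  proof (induction T arbitrary: f rule: finite_induct)
    case empty
    interpret prob_space "PiM {} (\<lambda>_. D)" by (rule prob_space_PiM) (rule D)
    show ?case using p by (simp add: emeasure_space_1 binomial_pmf_0)
  next
    case (insert t T)
    note f_meas[measurable] = insert.prems(1)
    let ?s = "\<lambda>x. \<Sum>j\<in>T. g (x j)"
    let ?E = "\<lambda>h. measure_pmf.expectation (binomial_pmf (card T) p) (\<lambda>k. h (real k))"
    have "(\<integral>\<^sup>+y. ennreal (f (\<Sum>j\<in>insert t T. g (y j))) \<partial>PiM (insert t T) (\<lambda>_. D))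
        = (\<integral>\<^sup>+x. (\<integral>\<^sup>+y. ennreal (f (\<Sum>j\<in>insert t T. g ((x(t:=y)) j))) \<partial>D) \<partial>PiM T (\<lambda>_. D))"
      by (rule product_nn_integral_insert) (use insert in auto)
    also have "\<dots> = (\<integral>\<^sup>+x. (\<integral>\<^sup>+y. ennreal (f (g y + ?s x)) \<partial>D) \<partial>PiM T (\<lambda>_. D))"
    proof -
      have "(\<Sum>j\<in>T. g ((x(t:=y)) j)) = ?s x" for x y
        using insert(2) by (intro sum.cong) auto
      then show ?thesis using insert(1,2) by simp
    qed
    also have "\<dots> \<le> (\<integral>\<^sup>+x. ennreal (1 - p) * ennreal (f (?s x)) + ennreal p * ennreal (f (?s x + 1)) \<partial>PiM T (\<lambda>_. D))"
      using nn_integral_below_unit_chords_le[OF D g g01 insert.prems(2,3)] p insert.prems(2)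
      unfolding p_def by (intro nn_integral_mono) (simp add: ennreal_plus ennreal_mult)
    also have "\<dots> = ennreal (1 - p) * (\<integral>\<^sup>+x. ennreal (f (?s x)) \<partial>PiM T (\<lambda>_. D))
        + ennreal p * (\<integral>\<^sup>+x. ennreal ((\<lambda>s. f (s + 1)) (?s x)) \<partial>PiM T (\<lambda>_. D))"
      by (subst nn_integral_add) (measurable, measurable, simp add: nn_integral_cmult)
    also have "\<dots> \<le> ennreal (1 - p) * ennreal (?E f) + ennreal p * ennreal (?E (\<lambda>s. f (s + 1)))"
      using insert.prems below_unit_chords_shift[OF insert.prems(3)]
      by (intro add_mono mult_left_mono insert.IH) auto
    also have "\<dots> = ennreal ((1 - p) * ?E f + p * ?E (\<lambda>s. f (s + 1)))"
      using p insert.prems(2) by (simp add: ennreal_plus ennreal_mult integral_nonneg_AE)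
    also have "(1 - p) * ?E f + p * ?E (\<lambda>s. f (s + 1))
        = measure_pmf.expectation (binomial_pmf (card (insert t T)) p) (\<lambda>k. f (real k))"
      using insert(1,2) p by (simp add: expectation_binomial_pmf_Suc add.commute)
    finally show ?case .
  qed
qed

lemma binomial_weight_exp_sq_has_derivative:
  fixes x q :: real and k n :: nat
  assumes x: "0 < x" "x < 1" and kn: "k \<le> n" and q: "real n * q = real k"
  defines "h \<equiv> \<lambda>x. x ^ k * (1 - x) ^ (n - k) * exp (2 * real n * (x - q)\<^sup>2)"
  shows "(h has_real_derivative h x * ((real k - real n * x) * (1 - 4 * x * (1 - x)) / (x * (1 - x)))) (at x)"
proof -
  define G where "G = (\<lambda>x. real k * ln x + real (n - k) * ln (1 - x) + 2 * real n * (x - q)\<^sup>2)"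
  have "(G has_real_derivative real k / x - real (n - k) / (1 - x) + 4 * real n * (x - q)) (at x)"
    unfolding G_def using x by (auto intro!: derivative_eq_intros)
  moreover have "real k / x - real (n - k) / (1 - x) + 4 * real n * (x - q)
      = (real k - real n * x) * (1 - 4 * x * (1 - x)) / (x * (1 - x))"
    using x kn by (simp add: of_nat_diff field_simps) (simp add: q[symmetric] algebra_simps)
  ultimately have "((\<lambda>x. exp (G x)) has_real_derivative
      exp (G x) * ((real k - real n * x) * (1 - 4 * x * (1 - x)) / (x * (1 - x)))) (at x)"
    using DERIV_chain2[OF DERIV_exp] by metis
  moreover have exp_G: "exp (G y) = h y" if "y \<in> {0<..<1}" for y
    using that by (simp add: G_def h_def exp_add exp_of_nat_mult)
  ultimately have "((\<lambda>x. exp (G x)) has_real_derivative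
      h x * ((real k - real n * x) * (1 - 4 * x * (1 - x)) / (x * (1 - x)))) (at x)"
    using x by simp
  then show ?thesis
    by (rule has_field_derivative_transform_within_open[where S="{0<..<1}"]) (use x exp_G in auto)
qed

text \<open>The bound behind the constant xi: as a function of \<mu>, the left-hand side increases up to
  k/n and decreases after it, because 1 - 4\<mu>(1-\<mu>) \<ge> 0.\<close>
lemma binomial_weight_exp_sq_le:
  fixes \<mu> :: real and k n :: nat
  assumes n: "1 \<le> n" and kn: "k \<le> n" and \<mu>: "0 \<le> \<mu>" "\<mu> \<le> 1"
  shows "\<mu> ^ k * (1 - \<mu>) ^ (n - k) * exp (2 * real n * (\<mu> - real k / real n)\<^sup>2)
           \<le> (real k / real n) ^ k * (1 - real k / real n) ^ (n - k)"
proof -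
  define q where "q = real k / real n"
  have q: "real n * q = real k" "0 \<le> q" "q \<le> 1"
    using n kn unfolding q_def by (auto simp: field_simps)
  define h where "h = (\<lambda>x. x ^ k * (1 - x) ^ (n - k) * exp (2 * real n * (x - q)\<^sup>2))"
  have cont: "continuous_on A h" for A
    unfolding h_def by (intro continuous_intros)
  have deriv: "(h has_real_derivative h x * ((real k - real n * x) * (1 - 4 * x * (1 - x)) / (x * (1 - x)))) (at x)"
    if "0 < x" "x < 1" for x
    unfolding h_def by (rule binomial_weight_exp_sq_has_derivative) (use that kn q in auto)
  have h0: "0 \<le> h x" if "0 < x" "x < 1" for x
    unfolding h_def using that by simp
  have factor: "0 \<le> 1 - 4 * x * (1 - x)" for x :: real
    using zero_le_power2[of "2 * x - 1"] by (simp add: power2_eq_square algebra_simps)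
  have "h \<mu> \<le> h q"
  proof (cases "\<mu> \<le> q")
    case True
    show ?thesis
    proof (rule DERIV_nonneg_imp_increasing_open[OF True _ cont])
      fix x assume x: "\<mu> < x" "x < q"
      then have x01: "0 < x" "x < 1" using \<mu> q by auto
      have "0 \<le> real k - real n * x"
        using mult_left_mono[of x q "real n"] x q by simp
      then have "0 \<le> h x * ((real k - real n * x) * (1 - 4 * x * (1 - x)) / (x * (1 - x)))"
        using x01 h0 factor by (intro mult_nonneg_nonneg divide_nonneg_pos) auto
      with deriv[OF x01] show "\<exists>y. (h has_real_derivative y) (at x) \<and> 0 \<le> y"
        by blast
    qed
  next
    case False
    show ?thesis
    proof (rule DERIV_nonpos_imp_decreasing_open[of q \<mu>, OF _ _ cont])
      fix x assume x: "q < x" "x < \<mu>"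
      then have x01: "0 < x" "x < 1" using \<mu> q by auto
      have "real k - real n * x \<le> 0"
        using mult_left_mono[of q x "real n"] x q by simp
      then have "h x * ((real k - real n * x) * (1 - 4 * x * (1 - x)) / (x * (1 - x))) \<le> 0"
        using x01 h0 factor by (intro mult_nonneg_nonpos divide_nonpos_pos mult_nonpos_nonneg) auto
      with deriv[OF x01] show "\<exists>y. (h has_real_derivative y) (at x) \<and> y \<le> 0"
        by blast
    qed (use False in auto)
  qed
  then show ?thesis
    unfolding h_def q_def by simp
qed

lemma nn_integral_exp_sq_deviation_le_xi:
  fixes g :: "'a \<Rightarrow> real"
  assumes D: "prob_space D" and g[measurable]: "g \<in> borel_measurable D"
    and g01: "\<And>z. z \<in> space D \<Longrightarrow> 0 \<le> g z \<and> g z \<le> 1"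
    and T: "finite T" "card T = n" and n: "1 \<le> n"
  shows "(\<integral>\<^sup>+y. ennreal (exp (2 * real n * (integral\<^sup>L D g - (\<Sum>j\<in>T. g (y j)) / real n)\<^sup>2)) \<partial>PiM T (\<lambda>_. D))
           \<le> ennreal (xi n)"
proof -
  define \<mu> where "\<mu> = integral\<^sup>L D g"
  have \<mu>: "\<mu> \<in> {0..1}"
    unfolding \<mu>_def using D g g01 by (rule integral_unit_interval)
  define f where "f = (\<lambda>s. exp (2 * real n * (\<mu> - (1 / real n) * s)\<^sup>2))"
  have "(\<integral>\<^sup>+y. ennreal (f (\<Sum>j\<in>T. g (y j))) \<partial>PiM T (\<lambda>_. D))
      \<le> ennreal (measure_pmf.expectation (binomial_pmf n \<mu>) (\<lambda>k. f (real k)))"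
    using nn_integral_sum_le_binomial_expectation[OF D g g01 T(1), of f] T(2)
      exp_sq_below_unit_chords[of "2 * real n" \<mu> "1 / real n"]
    unfolding f_def \<mu>_def by simp
  also have "measure_pmf.expectation (binomial_pmf n \<mu>) (\<lambda>k. f (real k))
      = (\<Sum>k\<le>n. real (n choose k) * (\<mu> ^ k * (1 - \<mu>) ^ (n - k) * f (real k)))"
    using \<mu> by (simp add: expectation_binomial_pmf' mult.assoc)
  also have "\<dots> \<le> (\<Sum>k\<le>n. real (n choose k) * ((real k / real n) ^ k * (1 - real k / real n) ^ (n - k)))"
    using binomial_weight_exp_sq_le[OF n _, of _ \<mu>] \<mu>
    unfolding f_def by (intro sum_mono mult_left_mono) (auto simp: divide_inverse mult.commute)
  also have "\<dots> = xi n"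
    unfolding xi_def by (simp add: atLeast0AtMost mult.assoc)
  finally show ?thesis
    unfolding f_def \<mu>_def using ennreal_leI by (simp add: divide_inverse mult.commute)
qed

lemma nn_integral_exp_sq_deviation_le_xi_local:
  fixes l :: "(nat \<Rightarrow> 'a) \<Rightarrow> 'a \<Rightarrow> real"
  assumes D: "prob_space D"
    and KT: "K \<inter> T = {}" "finite K" "finite T" "card T = n" and n: "1 \<le> n"
    and l_meas: "(\<lambda>(S, z). l S z) \<in> borel_measurable (PiM (K \<union> T) (\<lambda>_. D) \<Otimes>\<^sub>M D)"
    and dev_meas: "(\<lambda>S. ennreal (exp (2 * real n * ((\<integral>z. l S z \<partial>D) - (\<Sum>j\<in>T. l S (S j)) / real n)\<^sup>2)))
              \<in> borel_measurable (PiM (K \<union> T) (\<lambda>_. D))"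
    and l_local: "\<And>S S' z. (\<And>j. j \<in> K \<Longrightarrow> S j = S' j) \<Longrightarrow> l S z = l S' z"
    and l01: "\<And>S z. S \<in> space (PiM (K \<union> T) (\<lambda>_. D)) \<Longrightarrow> z \<in> space D \<Longrightarrow> 0 \<le> l S z \<and> l S z \<le> 1"
  shows "(\<integral>\<^sup>+S. ennreal (exp (2 * real n * ((\<integral>z. l S z \<partial>D) - (\<Sum>j\<in>T. l S (S j)) / real n)\<^sup>2))
            \<partial>PiM (K \<union> T) (\<lambda>_. D)) \<le> ennreal (xi n)"
proof -
  interpret product_sigma_finite "\<lambda>_. D"
    by (simp add: product_sigma_finite_def prob_space_imp_sigma_finite D)
  interpret PK: prob_space "PiM K (\<lambda>_. D)" by (rule prob_space_PiM) (rule D)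
  interpret PT: prob_space "PiM T (\<lambda>_. D)" by (rule prob_space_PiM) (rule D)
  let ?F = "\<lambda>S. ennreal (exp (2 * real n * ((\<integral>z. l S z \<partial>D) - (\<Sum>j\<in>T. l S (S j)) / real n)\<^sup>2))"
  have "(\<integral>\<^sup>+S. ?F S \<partial>PiM (K \<union> T) (\<lambda>_. D))
      = (\<integral>\<^sup>+x. (\<integral>\<^sup>+y. ?F (merge K T (x, y)) \<partial>PiM T (\<lambda>_. D)) \<partial>PiM K (\<lambda>_. D))"
    using dev_meas KT by (intro product_nn_integral_fold)
  also have "\<dots> \<le> (\<integral>\<^sup>+x. ennreal (xi n) \<partial>PiM K (\<lambda>_. D))"
  proof (rule nn_integral_mono)
    fix x assume x: "x \<in> space (PiM K (\<lambda>_. D))"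
    obtain y0 where y0: "y0 \<in> space (PiM T (\<lambda>_. D))" using PT.not_empty by blast
    define S0 where "S0 = merge K T (x, y0)"
    have S0: "S0 \<in> space (PiM (K \<union> T) (\<lambda>_. D))"
      unfolding S0_def using measurable_space[OF measurable_merge, of "(x, y0)" K "\<lambda>_. D" T] x y0
      by (simp add: space_pair_measure)
    have "l (merge K T (x, y)) = l S0" for y
      unfolding S0_def using KT(1) by (intro ext l_local) simp
    moreover have "(\<Sum>j\<in>T. l S0 (merge K T (x, y) j)) = (\<Sum>j\<in>T. l S0 (y j))" for y
      using KT(1) by (intro sum.cong) auto
    ultimately have "(\<integral>\<^sup>+y. ?F (merge K T (x, y)) \<partial>PiM T (\<lambda>_. D))
        = (\<integral>\<^sup>+y. ennreal (exp (2 * real n * (integral\<^sup>L D (l S0) - (\<Sum>j\<in>T. l S0 (y j)) / real n)\<^sup>2)) \<partial>PiM T (\<lambda>_. D))"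
      by simp
    also have "\<dots> \<le> ennreal (xi n)"
      using measurable_Pair2[OF l_meas S0] l01[OF S0] KT(3,4) n
      by (intro nn_integral_exp_sq_deviation_le_xi D) auto
    finally show "(\<integral>\<^sup>+y. ?F (merge K T (x, y)) \<partial>PiM T (\<lambda>_. D)) \<le> ennreal (xi n)" .
  qed
  also have "\<dots> = ennreal (xi n)"
    by (simp add: PK.emeasure_space_1)
  finally show ?thesis .
qed

lemma xi_ge_1:
  assumes "1 \<le> n" shows "1 \<le> xi n"
proof -
  have "(\<lambda>k. real (n choose k) * (real k / real n) ^ k * (1 - real k / real n) ^ (n - k)) 0 \<le> xi n"
    unfolding xi_def by (rule member_le_sum) auto
  then show ?thesis by simp
qed

text \<open>Pairing a with \<nu> a, the weight Q a - Q (\<nu> a) multiplying d a is bounded in absolute value by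
  Q a + Q (\<nu> a) = P a + P (\<nu> a).\<close>
lemma sum_aligned_antisymmetric_le:
  fixes d Q P :: "'a \<Rightarrow> real"
  assumes F: "finite F" "\<nu> ` F \<subseteq> F" and \<nu>_\<nu>: "\<And>a. a \<in> F \<Longrightarrow> \<nu> (\<nu> a) = a"
    and d: "\<And>a. a \<in> F \<Longrightarrow> d (\<nu> a) = - d a"
    and aligned: "\<And>a. a \<in> F \<Longrightarrow> Q a + Q (\<nu> a) = P a + P (\<nu> a)"
    and Q0: "\<And>a. 0 \<le> Q a"
  shows "(\<Sum>a\<in>F. Q a * d a) \<le> (\<Sum>a\<in>F. P a * \<bar>d a\<bar>)"
proof -
  have "bij_betw \<nu> F F"
    by (rule bij_betwI[where g=\<nu>]) (use F \<nu>_\<nu> in auto)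
  then have reindex: "(\<Sum>a\<in>F. h a) = (\<Sum>a\<in>F. h (\<nu> a))" for h :: "'a \<Rightarrow> real"
    by (simp add: sum.reindex_bij_betw)
  have "2 * (\<Sum>a\<in>F. Q a * d a) = (\<Sum>a\<in>F. Q a * d a) + (\<Sum>a\<in>F. Q (\<nu> a) * d (\<nu> a))"
    using reindex[of "\<lambda>a. Q a * d a"] by simp
  also have "\<dots> = (\<Sum>a\<in>F. (Q a - Q (\<nu> a)) * d a)"
    using d by (simp add: sum.distrib[symmetric] left_diff_distrib)
  also have "\<dots> \<le> (\<Sum>a\<in>F. (Q a + Q (\<nu> a)) * \<bar>d a\<bar>)"
  proof (rule sum_mono)
    fix a
    have "(Q a - Q (\<nu> a)) * d a \<le> \<bar>Q a - Q (\<nu> a)\<bar> * \<bar>d a\<bar>"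
      by (metis abs_ge_self abs_mult)
    also have "\<dots> \<le> (Q a + Q (\<nu> a)) * \<bar>d a\<bar>"
      using Q0[of a] Q0[of "\<nu> a"] by (intro mult_right_mono) auto
    finally show "(Q a - Q (\<nu> a)) * d a \<le> (Q a + Q (\<nu> a)) * \<bar>d a\<bar>" .
  qed
  also have "\<dots> = (\<Sum>a\<in>F. P a * \<bar>d a\<bar>) + (\<Sum>a\<in>F. P (\<nu> a) * \<bar>d (\<nu> a)\<bar>)"
    using aligned d by (simp add: sum.distrib[symmetric] distrib_right)
  also have "\<dots> = 2 * (\<Sum>a\<in>F. P a * \<bar>d a\<bar>)"
    using reindex[of "\<lambda>a. P a * \<bar>d a\<bar>"] by simp
  finally show ?thesis by simp
qed

lemma add_ratio_le_sqrt:
  fixes l m a w :: real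
  assumes lm: "0 \<le> l" "l < m" and a: "0 \<le> a" "a \<le> 1" and w: "2 * (m - l) * a\<^sup>2 \<le> w"
  shows "a + l / m \<le> sqrt (1 / (2 * (m - l)) * (4 * l + w))"
proof (rule real_le_rsqrt)
  have pos: "0 < m" "0 < m - l" using lm by auto
  have "(2 * m + l) * (m - l) \<le> 2 * m * m" using lm by (simp add: algebra_simps)
  then have "2 + l / m \<le> 2 * m / (m - l)" using pos by (simp add: field_simps)
  then have "l / m * (2 + l / m) \<le> l / m * (2 * m / (m - l))" using lm pos by (intro mult_left_mono) auto
  then have ratio: "2 * (l / m) + (l / m)\<^sup>2 \<le> 2 * l / (m - l)"
    using pos by (simp add: power2_eq_square algebra_simps)
  have "a * (l / m) \<le> l / m"
    using a lm pos by (intro mult_left_le_one_le) auto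
  moreover have "a\<^sup>2 \<le> w / (2 * (m - l))"
    using w pos by (simp add: field_simps)
  moreover have "(a + l / m)\<^sup>2 = a\<^sup>2 + 2 * (a * (l / m)) + (l / m)\<^sup>2"
    by (simp add: power2_eq_square algebra_simps)
  ultimately have "(a + l / m)\<^sup>2 \<le> w / (2 * (m - l)) + 2 * l / (m - l)"
    using ratio by linarith
  also have "\<dots> = 1 / (2 * (m - l)) * (4 * l + w)"
  proof -
    have "w / (2 * r) + 2 * l / r = 1 / (2 * r) * (4 * l + w)" if "0 < r" for r
      using that by (simp add: field_simps)
    then show ?thesis using pos(2) .
  qed
  finally show "(a + l / m)\<^sup>2 \<le> 1 / (2 * (m - l)) * (4 * l + w)" .
qed


lemma (in prob_space) prob_le_div_ge_Markov:
  fixes f :: "'a \<Rightarrow> real"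
  assumes f[measurable]: "f \<in> borel_measurable M"
    and bound: "(\<integral>\<^sup>+x. ennreal (f x) \<partial>M) \<le> ennreal B" and "0 < B" "0 < \<delta>"
  shows "1 - \<delta> \<le> prob {x \<in> space M. f x \<le> B / \<delta>}"
proof -
  define c where "c = B / \<delta>"
  have c: "0 < c" unfolding c_def using assms by simp
  have "space M - {x \<in> space M. f x \<le> c} \<subseteq> {x \<in> space M. 1 \<le> ennreal (1 / c) * ennreal (f x)}"
    using c by (auto simp: field_simps ennreal_mult[symmetric] intro!: ennreal_leI[where x=1, simplified])
  then have "emeasure M (space M - {x \<in> space M. f x \<le> c})
      \<le> emeasure M {x \<in> space M. 1 \<le> ennreal (1 / c) * ennreal (f x)}"
    by (intro emeasure_mono) measurable
  also have "\<dots> \<le> ennreal (1 / c) * (\<integral>\<^sup>+x. ennreal (f x) * indicator (space M) x \<partial>M)"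
    by (rule nn_integral_Markov_inequality) auto
  also have "(\<integral>\<^sup>+x. ennreal (f x) * indicator (space M) x \<partial>M) = (\<integral>\<^sup>+x. ennreal (f x) \<partial>M)"
    by (intro nn_integral_cong) auto
  also have "ennreal (1 / c) * \<dots> \<le> ennreal (1 / c) * ennreal B"
    using bound by (rule mult_left_mono) simp
  also have "\<dots> = ennreal \<delta>"
    using c assms unfolding c_def by (simp add: ennreal_mult[symmetric])
  finally have "prob (space M - {x \<in> space M. f x \<le> c}) \<le> \<delta>"
    using assms by (simp add: emeasure_eq_measure)
  then show ?thesis
    using prob_compl[of "{x \<in> space M. f x \<le> c}"] unfolding c_def by simp
qed

definition codes :: "nat \<Rightarrow> nat \<Rightarrow> (nat list \<times> int list) set" where
  "codes m lam = idx_seqs m lam \<times> msgs lam"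

lemma finite_codes: "finite (codes m lam)"
proof -
  have "idx_seqs m lam = {is. set is \<subseteq> {..<m} \<and> length is \<le> lam}"
    unfolding idx_seqs_def by auto
  moreover have "msgs lam \<subseteq> {s. set s \<subseteq> {-1, 1} \<and> length s \<le> lam}"
    unfolding msgs_def by auto
  ultimately show ?thesis
    unfolding codes_def
    using finite_lists_length_le[of "{..<m}" lam] finite_lists_length_le[of "{-1, 1 :: int}" lam]
    by (auto intro: finite_subset)
qed

definition flip_code :: "nat list \<times> int list \<Rightarrow> nat list \<times> int list" where
  "flip_code a = (fst a, map uminus (snd a))"

lemma flip_code_flip_code [simp]: "flip_code (flip_code a) = a"
  by (simp add: flip_code_def comp_def)

lemma flip_code_in_codes: "a \<in> codes m lam \<Longrightarrow> flip_code a \<in> codes m lam"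
  by (auto simp: flip_code_def codes_def msgs_def)

lemma aligned_flip_code:
  "aligned Q P \<Longrightarrow> pmf Q a + pmf Q (flip_code a) = pmf P a + pmf P (flip_code a)"
  by (cases a) (simp add: aligned_def flip_code_def)

locale compression_scheme =
  fixes X :: "'x measure" and D :: "('x \<times> real) measure"
    and R :: "('x \<times> real) list \<Rightarrow> int list \<Rightarrow> 'x \<Rightarrow> real" and m lam :: nat
  assumes lam_less_m: "lam < m"
    and prob_space_D: "prob_space D"
    and sets_D: "sets D = sets (X \<Otimes>\<^sub>M count_space {-1, 1})"
    and self_complemented_R: "self_complemented R"
    and R_bounded: "\<And>L \<sigma> x. \<bar>R L \<sigma> x\<bar> \<le> 1"
    and R_measurable: "\<And>i \<sigma>. (i, \<sigma>) \<in> codes m lam \<Longrightarrow>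
          (\<lambda>(S, x). R (map S i) \<sigma> x) \<in> borel_measurable (PiM {..<m} (\<lambda>_. D) \<Otimes>\<^sub>M X)"
begin

abbreviation samples :: "(nat \<Rightarrow> 'x \<times> real) measure" where
  "samples \<equiv> PiM {..<m} (\<lambda>_. D)"

sublocale D: prob_space D
  by (fact prob_space_D)

sublocale samples: prob_space samples
  by (rule prob_space_PiM) (rule prob_space_D)

lemma space_D: "space D = space X \<times> {-1, 1}"
  using sets_eq_imp_space_eq[OF sets_D] by (simp add: space_pair_measure)

lemma measurable_fst_D [measurable]: "fst \<in> measurable D X"
  using measurable_cong_sets[OF sets_D refl, of X] measurable_fst by blast

lemma measurable_snd_D [measurable]: "snd \<in> borel_measurable D"
proof -
  have "snd \<in> measurable (X \<Otimes>\<^sub>M count_space {-1, 1::real}) borel"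
    by (rule measurable_compose[OF measurable_snd]) simp
  then show ?thesis
    by (subst measurable_cong_sets[OF sets_D refl])
qed

definition loss :: "nat list \<times> int list \<Rightarrow> (nat \<Rightarrow> 'x \<times> real) \<Rightarrow> 'x \<times> real \<Rightarrow> real" where
  "loss a S z = (1 - snd z * R (map S (fst a)) (snd a) (fst z)) / 2"

definition true_loss :: "nat list \<times> int list \<Rightarrow> (nat \<Rightarrow> 'x \<times> real) \<Rightarrow> real" where
  "true_loss a S = (\<integral>z. loss a S z \<partial>D)"

definition emp_loss :: "nat list \<times> int list \<Rightarrow> (nat \<Rightarrow> 'x \<times> real) \<Rightarrow> real" where
  "emp_loss a S = (\<Sum>j<m. loss a S (S j)) / real m"

text \<open>Any m - lam sample points outside the compression sequence; there are at least that many
  since the sequence has length at most lam.\<close>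
definition holdout :: "nat list \<Rightarrow> nat set" where
  "holdout i = (SOME T. T \<subseteq> {..<m} - set i \<and> card T = m - lam)"

definition holdout_dev :: "nat list \<times> int list \<Rightarrow> (nat \<Rightarrow> 'x \<times> real) \<Rightarrow> real" where
  "holdout_dev a S = true_loss a S - (\<Sum>j\<in>holdout (fst a). loss a S (S j)) / real (m - lam)"

definition potential :: "(nat list \<times> int list) pmf \<Rightarrow> (nat \<Rightarrow> 'x \<times> real) \<Rightarrow> real" where
  "potential P S = (\<Sum>a\<in>codes m lam. pmf P a * exp (2 * real (m - lam) * (holdout_dev a S)\<^sup>2))"

lemma loss_bounds:
  assumes "z \<in> space D" shows "0 \<le> loss a S z \<and> loss a S z \<le> 1"
proof -
  have "snd z \<in> {-1, 1}" using assms by (auto simp: space_D)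
  moreover have "\<bar>R (map S (fst a)) (snd a) (fst z)\<bar> \<le> 1" by (rule R_bounded)
  ultimately show ?thesis
    unfolding loss_def by auto
qed

lemma loss_flip_code: "loss (flip_code a) S z = 1 - loss a S z"
  using self_complemented_R
  by (simp add: self_complemented_def loss_def flip_code_def field_simps)

lemma measurable_loss:
  assumes "a \<in> codes m lam"
  shows "(\<lambda>(S, z). loss a S z) \<in> borel_measurable (samples \<Otimes>\<^sub>M D)"
proof -
  have R_meas: "(\<lambda>p. R (map (fst p) (fst a)) (snd a) (snd p)) \<in> borel_measurable (samples \<Otimes>\<^sub>M X)"
    using R_measurable[of "fst a" "snd a"] assms by (simp add: case_prod_beta')
  have "(\<lambda>w. (fst w, fst (snd w))) \<in> measurable (samples \<Otimes>\<^sub>M D) (samples \<Otimes>\<^sub>M X)"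
    by measurable
  from measurable_compose[OF this R_meas] have [measurable]:
    "(\<lambda>w. R (map (fst w) (fst a)) (snd a) (fst (snd w))) \<in> borel_measurable (samples \<Otimes>\<^sub>M D)"
    by simp
  show ?thesis
    unfolding loss_def case_prod_beta' by measurable
qed

lemma integrable_loss:
  assumes "a \<in> codes m lam" "S \<in> space samples"
  shows "integrable D (loss a S)"
  using measurable_Pair2[OF measurable_loss[OF assms(1)] assms(2)] loss_bounds
  by (intro D.integrable_const_bound[where B=1] AE_I2) auto

lemma true_loss_bounds:
  assumes "a \<in> codes m lam" "S \<in> space samples"
  shows "0 \<le> true_loss a S \<and> true_loss a S \<le> 1"
  using integral_unit_interval[OF prob_space_D, of "loss a S"]
    measurable_Pair2[OF measurable_loss[OF assms(1)] assms(2)] loss_bounds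
  unfolding true_loss_def by auto

lemma true_loss_flip_code:
  assumes "a \<in> codes m lam" "S \<in> space samples"
  shows "true_loss (flip_code a) S = 1 - true_loss a S"
  using integrable_loss[OF assms] unfolding true_loss_def loss_flip_code by (simp add: D.prob_space)

lemma emp_loss_flip_code: "emp_loss (flip_code a) S = 1 - emp_loss a S"
  using lam_less_m unfolding emp_loss_def loss_flip_code by (simp add: sum_subtractf field_simps)

lemma holdout_subset_card:
  assumes "i \<in> idx_seqs m lam"
  shows "holdout i \<subseteq> {..<m} - set i" "card (holdout i) = m - lam"
proof -
  have i: "set i \<subseteq> {..<m}" "card (set i) \<le> lam"
    using assms card_length[of i] unfolding idx_seqs_def by auto
  then have "m - lam \<le> card ({..<m} - set i)"
    by (simp add: card_Diff_subset)
  then obtain T where "T \<subseteq> {..<m} - set i" "card T = m - lam"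
    by (rule obtain_subset_with_card_n)
  then have "holdout i \<subseteq> {..<m} - set i \<and> card (holdout i) = m - lam"
    unfolding holdout_def by (rule someI[where P="\<lambda>T. T \<subseteq> {..<m} - set i \<and> card T = m - lam", OF conjI])
  then show "holdout i \<subseteq> {..<m} - set i" "card (holdout i) = m - lam" by auto
qed

lemma measurable_holdout_dev:
  assumes a: "a \<in> codes m lam"
  shows "holdout_dev a \<in> borel_measurable samples"
proof -
  note [measurable] = measurable_loss[OF a]
  have [measurable]: "(\<lambda>S. loss a S (S j)) \<in> borel_measurable samples" if "j < m" for j
  proof -
    have "(\<lambda>S. (S, S j)) \<in> measurable samples (samples \<Otimes>\<^sub>M D)"
      using that by (intro measurable_Pair measurable_ident_sets measurable_component_singleton) auto
    from measurable_compose[OF this measurable_loss[OF a]] show ?thesis by simp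
  qed
  have "true_loss a \<in> borel_measurable samples"
    unfolding true_loss_def by measurable
  moreover have "holdout (fst a) \<subseteq> {..<m}"
    using holdout_subset_card(1)[of "fst a"] a by (auto simp: codes_def)
  ultimately show ?thesis
    unfolding holdout_dev_def by (intro borel_measurable_diff borel_measurable_divide borel_measurable_sum) auto
qed

lemma nn_integral_exp_holdout_dev_le_xi:
  assumes a: "a \<in> codes m lam"
  shows "(\<integral>\<^sup>+S. ennreal (exp (2 * real (m - lam) * (holdout_dev a S)\<^sup>2)) \<partial>samples) \<le> ennreal (xi (m - lam))"
proof -
  have i: "fst a \<in> idx_seqs m lam" using a by (auto simp: codes_def)
  define T K where "T = holdout (fst a)" and "K = {..<m} - T"
  have KT: "K \<inter> T = {}" "finite K" "finite T" "K \<union> T = {..<m}"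
    using holdout_subset_card(1)[OF i] unfolding K_def T_def by (auto intro: finite_subset)
  have set_K: "set (fst a) \<subseteq> K"
    using holdout_subset_card(1)[OF i] i unfolding K_def T_def idx_seqs_def by auto
  have dev: "(\<integral>z. loss a S z \<partial>D) - (\<Sum>j\<in>T. loss a S (S j)) / real (m - lam) = holdout_dev a S" for S
    unfolding holdout_dev_def true_loss_def T_def ..
  have "(\<integral>\<^sup>+S. ennreal (exp (2 * real (m - lam) * ((\<integral>z. loss a S z \<partial>D)
      - (\<Sum>j\<in>T. loss a S (S j)) / real (m - lam))\<^sup>2)) \<partial>PiM (K \<union> T) (\<lambda>_. D)) \<le> ennreal (xi (m - lam))"
  proof (rule nn_integral_exp_sq_deviation_le_xi_local[OF prob_space_D KT(1-3)])
    show "card T = m - lam" "1 \<le> m - lam"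
      using holdout_subset_card(2)[OF i] lam_less_m unfolding T_def by auto
    show "(\<lambda>(S, z). loss a S z) \<in> borel_measurable (PiM (K \<union> T) (\<lambda>_. D) \<Otimes>\<^sub>M D)"
      using measurable_loss[OF a] unfolding KT(4) .
    note [measurable] = measurable_holdout_dev[OF a]
    show "(\<lambda>S. ennreal (exp (2 * real (m - lam) * ((\<integral>z. loss a S z \<partial>D)
        - (\<Sum>j\<in>T. loss a S (S j)) / real (m - lam))\<^sup>2))) \<in> borel_measurable (PiM (K \<union> T) (\<lambda>_. D))"
      unfolding dev KT(4) by measurable
    show "loss a S z = loss a S' z" if "\<And>j. j \<in> K \<Longrightarrow> S j = S' j" for S S' z
    proof -
      have "map S (fst a) = map S' (fst a)"
        using that set_K by (intro map_cong) auto
      then show ?thesis unfolding loss_def by (rule arg_cong)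
    qed
    show "0 \<le> loss a S z \<and> loss a S z \<le> 1" if "z \<in> space D" for S z
      using loss_bounds[OF that] .
  qed
  then show ?thesis
    unfolding dev KT(4) .
qed

lemma measurable_potential [measurable]: "potential P \<in> borel_measurable samples"
  unfolding potential_def using measurable_holdout_dev by (intro borel_measurable_sum) measurable

lemma nn_integral_potential_le_xi:
  assumes P: "set_pmf P \<subseteq> codes m lam"
  shows "(\<integral>\<^sup>+S. ennreal (potential P S) \<partial>samples) \<le> ennreal (xi (m - lam))"
proof -
  let ?e = "\<lambda>a S. ennreal (exp (2 * real (m - lam) * (holdout_dev a S)\<^sup>2))"
  have e_meas: "(\<lambda>S. ?e a S) \<in> borel_measurable samples" if "a \<in> codes m lam" for a
    using measurable_holdout_dev[OF that] by measurable
  have "(\<integral>\<^sup>+S. ennreal (potential P S) \<partial>samples) = (\<integral>\<^sup>+S. (\<Sum>a\<in>codes m lam. ennreal (pmf P a) * ?e a S) \<partial>samples)"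
    unfolding potential_def by (intro nn_integral_cong) (simp add: ennreal_mult sum_ennreal[symmetric])
  also have "\<dots> = (\<Sum>a\<in>codes m lam. ennreal (pmf P a) * (\<integral>\<^sup>+S. ?e a S \<partial>samples))"
    using e_meas by (simp add: nn_integral_sum nn_integral_cmult)
  also have "\<dots> \<le> (\<Sum>a\<in>codes m lam. ennreal (pmf P a) * ennreal (xi (m - lam)))"
    by (intro sum_mono mult_left_mono nn_integral_exp_holdout_dev_le_xi) auto
  also have "\<dots> = ennreal (xi (m - lam))"
    using sum_pmf_eq_1[OF finite_codes P]
    by (simp add: ennreal_mult[symmetric] sum_ennreal sum_distrib_right[symmetric])
  finally show ?thesis .
qed

lemma prob_potential_le:
  assumes "set_pmf P \<subseteq> codes m lam" and "0 < \<delta>"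
  shows "1 - \<delta> \<le> samples.prob {S \<in> space samples. potential P S \<le> xi (m - lam) / \<delta>}"
proof (rule samples.prob_le_div_ge_Markov[OF measurable_potential nn_integral_potential_le_xi[OF assms(1)]])
  show "0 < xi (m - lam)"
    using lam_less_m by (intro less_le_trans[OF zero_less_one xi_ge_1]) simp
qed (fact assms(2))

lemma risk_D_eq_sum:
  assumes "set_pmf Q \<subseteq> codes m lam"
  shows "risk_D D R Q S = (\<Sum>a\<in>codes m lam. pmf Q a * true_loss a S)"
  unfolding risk_D_def
  by (subst integral_measure_pmf_real[OF finite_codes])
     (use assms in \<open>auto simp: true_loss_def loss_def case_prod_beta' mult.commute intro!: sum.cong\<close>)

lemma risk_S_eq_sum:
  assumes "set_pmf Q \<subseteq> codes m lam"
  shows "risk_S m R Q S = (\<Sum>a\<in>codes m lam. pmf Q a * emp_loss a S)"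
  unfolding risk_S_def
  by (subst integral_measure_pmf_real[OF finite_codes])
     (use assms in \<open>auto simp: emp_loss_def loss_def case_prod_beta' mult.commute intro!: sum.cong\<close>)

text \<open>The empirical loss mixes the holdout average u with the remaining lam sample points, so it
  differs from u by at most lam / m.\<close>
lemma true_loss_emp_loss_bounds:
  assumes a: "a \<in> codes m lam" and S: "S \<in> space samples"
  shows "\<bar>true_loss a S - emp_loss a S\<bar> \<le> \<bar>holdout_dev a S\<bar> + real lam / real m"
    and "\<bar>holdout_dev a S\<bar> \<le> 1"
proof -
  have i: "fst a \<in> idx_seqs m lam" using a by (auto simp: codes_def)
  define T where "T = holdout (fst a)"
  have T: "T \<subseteq> {..<m}" "card T = m - lam" "finite T"
    using holdout_subset_card[OF i] unfolding T_def by (auto intro: finite_subset)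
  have card_rest: "card ({..<m} - T) = lam"
    using T lam_less_m by (simp add: card_Diff_subset)
  define f where "f j = loss a S (S j)" for j
  have f: "0 \<le> f j \<and> f j \<le> 1" if "j < m" for j
    unfolding f_def using S that by (intro loss_bounds) (auto simp: space_PiM)
  define u where "u = (\<Sum>j\<in>T. f j) / real (m - lam)"
  define r where "r = (\<Sum>j\<in>{..<m} - T. f j)"
  have "(\<Sum>j\<in>T. f j) \<le> real (m - lam)"
    using sum_bounded_above[of T f 1] f T by auto
  then have u: "0 \<le> u" "u \<le> 1"
    unfolding u_def using f T lam_less_m by (auto intro!: sum_nonneg divide_nonneg_nonneg)
  have r: "0 \<le> r" "r \<le> real lam"
    unfolding r_def using f card_rest sum_bounded_above[of "{..<m} - T" f 1] by (auto intro!: sum_nonneg)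
  have emp: "emp_loss a S = (r + real (m - lam) * u) / real m"
    using sum.subset_diff[OF T(1), of f] lam_less_m unfolding emp_loss_def r_def u_def f_def by simp
  have dev: "holdout_dev a S = true_loss a S - u"
    unfolding holdout_dev_def u_def f_def T_def ..
  have "true_loss a S - emp_loss a S - holdout_dev a S = (real lam * u - r) / real m"
    unfolding emp dev using lam_less_m by (simp add: of_nat_diff field_simps)
  moreover have "0 \<le> real lam * u" "real lam * u \<le> real lam"
    using u mult_left_le_one_le[of "real lam" u] by (auto simp: mult.commute)
  then have "\<bar>real lam * u - r\<bar> \<le> real lam"
    using r by (simp add: abs_le_iff)
  ultimately have "\<bar>true_loss a S - emp_loss a S - holdout_dev a S\<bar> \<le> real lam / real m"
    by (simp add: divide_right_mono)
  then show "\<bar>true_loss a S - emp_loss a S\<bar> \<le> \<bar>holdout_dev a S\<bar> + real lam / real m"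
    by linarith
  show "\<bar>holdout_dev a S\<bar> \<le> 1"
    using dev u true_loss_bounds[OF a S] by linarith
qed

lemma risk_D_le_of_potential_le:
  assumes S: "S \<in> space samples" and P: "set_pmf P \<subseteq> codes m lam"
    and Q: "set_pmf Q \<subseteq> codes m lam" "aligned Q P" and potential: "potential P S \<le> c"
  shows "risk_D D R Q S \<le> risk_S m R Q S + sqrt (1 / (2 * (real m - real lam)) * (4 * real lam + ln c))"
proof -
  let ?F = "codes m lam" and ?n = "real (m - lam)"
  define dev where "dev a = holdout_dev a S" for a
  define A where "A = (\<Sum>a\<in>?F. pmf P a * \<bar>dev a\<bar>)"
  have P1: "(\<Sum>a\<in>?F. pmf P a) = 1" and F: "?F \<noteq> {}"
    using sum_pmf_eq_1[OF finite_codes P] by auto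
  have dev: "\<bar>true_loss a S - emp_loss a S\<bar> \<le> \<bar>dev a\<bar> + real lam / real m" "\<bar>dev a\<bar> \<le> 1"
    if "a \<in> ?F" for a
    using true_loss_emp_loss_bounds[OF that S] unfolding dev_def by auto
  have "risk_D D R Q S - risk_S m R Q S = (\<Sum>a\<in>?F. pmf Q a * (true_loss a S - emp_loss a S))"
    unfolding risk_D_eq_sum[OF Q(1)] risk_S_eq_sum[OF Q(1)] by (simp add: sum_subtractf right_diff_distrib)
  also have "\<dots> \<le> (\<Sum>a\<in>?F. pmf P a * \<bar>true_loss a S - emp_loss a S\<bar>)"
    using aligned_flip_code[OF Q(2)] flip_code_in_codes true_loss_flip_code[OF _ S] emp_loss_flip_code
    by (intro sum_aligned_antisymmetric_le[where \<nu> = flip_code] finite_codes) auto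
  also have "\<dots> \<le> (\<Sum>a\<in>?F. pmf P a * (\<bar>dev a\<bar> + real lam / real m))"
    using dev by (intro sum_mono mult_left_mono) auto
  also have "\<dots> = A + real lam / real m"
    unfolding A_def distrib_left sum.distrib sum_distrib_right[symmetric] P1 by simp
  finally have risk: "risk_D D R Q S \<le> risk_S m R Q S + (A + real lam / real m)"
    by simp
  have "A\<^sup>2 \<le> (\<Sum>a\<in>?F. pmf P a * (dev a)\<^sup>2)"
    unfolding A_def using convex_on_sum[OF finite_codes F convex_power2 P1, where y = "\<lambda>a. \<bar>dev a\<bar>"] by simp
  then have "2 * ?n * A\<^sup>2 \<le> 2 * ?n * (\<Sum>a\<in>?F. pmf P a * (dev a)\<^sup>2)"
    by (rule mult_left_mono) simp
  then have "exp (2 * ?n * A\<^sup>2) \<le> exp (\<Sum>a\<in>?F. pmf P a * (2 * ?n * (dev a)\<^sup>2))"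
    by (simp add: sum_distrib_left mult.left_commute)
  also have "\<dots> \<le> (\<Sum>a\<in>?F. pmf P a * exp (2 * ?n * (dev a)\<^sup>2))"
    using convex_on_sum[OF finite_codes F exp_convex P1] by simp
  also have "\<dots> \<le> c"
    using potential unfolding potential_def dev_def .
  finally have "exp (2 * ?n * A\<^sup>2) \<le> c" .
  then have "2 * (real m - real lam) * A\<^sup>2 \<le> ln c"
    using lam_less_m ln_ge_iff[OF less_le_trans[OF exp_gt_zero]] by (simp add: of_nat_diff)
  moreover have "A \<le> (\<Sum>a\<in>?F. pmf P a * 1)"
    unfolding A_def using dev(2) by (intro sum_mono mult_left_mono) auto
  ultimately have "A + real lam / real m \<le> sqrt (1 / (2 * (real m - real lam)) * (4 * real lam + ln c))"
    using lam_less_m P1 unfolding A_def by (intro add_ratio_le_sqrt sum_nonneg) auto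
  with risk show ?thesis by linarith
qed

end

theorem mainTheorem17:
  fixes X :: "'x measure" and D :: "('x \<times> real) measure"
    and R :: "('x \<times> real) list \<Rightarrow> int list \<Rightarrow> 'x \<Rightarrow> real"
    and P :: "(nat list \<times> int list) pmf" and m lam :: nat and \<delta> :: real
  assumes "lam < m"
    and "prob_space D"
    and "sets D = sets (X \<Otimes>\<^sub>M count_space {-1, 1})"
    and "self_complemented R"
    and "\<forall>L \<sigma> x. \<bar>R L \<sigma> x\<bar> \<le> 1"
    and "\<forall>i\<in>idx_seqs m lam. \<forall>\<sigma>\<in>msgs lam.
           (\<lambda>(S, x). R (map S i) \<sigma> x) \<in> borel_measurable (PiM {..<m} (\<lambda>_. D) \<Otimes>\<^sub>M X)"
    and "set_pmf P \<subseteq> idx_seqs m lam \<times> msgs lam"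
    and "0 < \<delta>" and "\<delta> \<le> 1"
  shows "\<exists>A\<in>sets (PiM {..<m} (\<lambda>_. D)).
           measure (PiM {..<m} (\<lambda>_. D)) A \<ge> 1 - \<delta> \<and>
           (\<forall>S\<in>A. \<forall>Q. set_pmf Q \<subseteq> idx_seqs m lam \<times> msgs lam \<and> aligned Q P \<longrightarrow>
              risk_D D R Q S \<le> risk_S m R Q S
                + sqrt (1 / (2 * (real m - real lam)) * (4 * real lam + ln (xi (m - lam) / \<delta>))))"
proof -
  interpret compression_scheme X D R m lam
  proof (rule compression_scheme.intro)
    show "\<bar>R L \<sigma> x\<bar> \<le> 1" for L \<sigma> x
      using assms(5) by blast
    show "(\<lambda>(S, x). R (map S i) \<sigma> x) \<in> borel_measurable (PiM {..<m} (\<lambda>_. D) \<Otimes>\<^sub>M X)"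
      if "(i, \<sigma>) \<in> codes m lam" for i \<sigma>
      using assms(6) that unfolding codes_def by blast
  qed (fact assms)+
  have P: "set_pmf P \<subseteq> codes m lam"
    using assms(7) unfolding codes_def .
  let ?A = "{S \<in> space samples. potential P S \<le> xi (m - lam) / \<delta>}"
  show ?thesis
  proof (intro bexI[of _ ?A] conjI ballI allI impI)
    show "?A \<in> sets samples"
      by measurable
    show "1 - \<delta> \<le> measure samples ?A"
      using prob_potential_le[OF P assms(8)] .
    fix S Q assume "S \<in> ?A" and "set_pmf Q \<subseteq> idx_seqs m lam \<times> msgs lam \<and> aligned Q P"
    then show "risk_D D R Q S \<le> risk_S m R Q S
        + sqrt (1 / (2 * (real m - real lam)) * (4 * real lam + ln (xi (m - lam) / \<delta>)))"
      using risk_D_le_of_potential_le[OF _ P] unfolding codes_def by auto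
  qed
qed

end
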